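(* Let $S$ be a finite set of polyhedra in $\mathbb{R}^3$ and let $\Pi$ be the (finite) set of planes containing faces of polyhedra in $S$. For each $R\in\Pi$, the lines $R\cap R'$, for $R'\in\Pi$ not parallel to $R$, subdivide $R$; call the connected components of the complement in $R$ of the union of these lines the cells of $R$ (these are open convex subsets of $R$, some bounded and some unbounded). Then there exists $\varepsilon>0$ with the following property. Let $M$ be any finite set of point-plane markers such that each $(p,R)\in M$ has $p$ on a face $F$ of a polyhedron of $S$ with $R$ the plane of $F$, and such that for every face $F$ and every point $x\in F$ there is a marker $(p,R)\in M$ with $p\in F$, $R$ the plane of $F$, and $|x-p|<\varepsilon$. Then the set of planes $\{R:(p,R)\in M\}$ equals $\Pi$, and the union of all faces of all polyhedra of $S$ equals the union of the closures of those bounded cells $C$ of planes $R\in\Pi$ for which there is a marker $(p,R)\in M$ with $p\in C$. In particular the scene is unambiguously reconstructed from the marker data.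
   Context: A polygon is a closed, connected, two-dimensional region of a plane whose boundary consists of finitely many segments (edges) with endpoints (vertices), each vertex being an endpoint of two edges and two edges meeting only in a vertex. A polyhedron is a closed, connected, three-dimensional region of $\mathbb{R}^3$ whose boundary consists of finitely many polygons (faces) such that every edge of every face is shared with exactly one other face, two faces intersect only in shared edges or vertices, and the faces sharing a vertex can be cyclically ordered so that consecutive faces share an edge. Faces are taken to be maximal: the closures of the connected components of the set of points of $\partial P$ having a neighbourhood in $\partial P$ contained in a single plane. A point-plane marker is a pair $(p,R)$ with $R$ a plane in $\mathbb{R}^3$ and $p\in R$. *)

theory Defs
  imports "HOL-Analysis.Analysis"
begin

type_synonym point = "real ^ 3"

definition is_plane :: "point set \<Rightarrow> bool" where
  "is_plane H \<longleftrightarrow> (\<exists>a b. a \<noteq> 0 \<and> H = {x. a \<bullet> x = b})"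

text \<open>Q is a polygon whose boundary (relative to its plane) is decomposed into the
  edges E; an edge is given by the two-element set of its endpoints.\<close>
definition polygon_with :: "point set \<Rightarrow> point set set \<Rightarrow> bool" where
  "polygon_with Q E \<longleftrightarrow>
     compact Q \<and> connected Q \<and> aff_dim Q = 2 \<and> Q = closure (rel_interior Q) \<and>
     finite E \<and> (\<forall>e\<in>E. card e = 2) \<and>
     rel_frontier Q = \<Union> ((\<lambda>e. convex hull e) ` E) \<and>
     (\<forall>v\<in>\<Union>E. card {e\<in>E. v \<in> e} = 2) \<and>
     (\<forall>e1\<in>E. \<forall>e2\<in>E. e1 \<noteq> e2 \<longrightarrow> convex hull e1 \<inter> convex hull e2 \<subseteq> e1 \<inter> e2)"

definition polyhedron :: "point set \<Rightarrow> bool" where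
  "polyhedron P \<longleftrightarrow>
     compact P \<and> connected P \<and> interior P \<noteq> {} \<and> P = closure (interior P) \<and>
     (\<exists>(F :: point set set) (edg :: point set \<Rightarrow> point set set).
        finite F \<and> (\<forall>Q\<in>F. polygon_with Q (edg Q)) \<and>
        frontier P = \<Union> F \<and>
        (\<forall>Q\<in>F. \<forall>e\<in>edg Q. \<exists>!Q'. Q' \<in> F \<and> Q' \<noteq> Q \<and> e \<in> edg Q') \<and>
        (\<forall>Q\<in>F. \<forall>Q'\<in>F. Q \<noteq> Q' \<longrightarrow>
            Q \<inter> Q' \<subseteq> \<Union> ((\<lambda>e. convex hull e) ` (edg Q \<inter> edg Q')) \<union>
                      (\<Union>(edg Q) \<inter> \<Union>(edg Q'))) \<and>
        (\<forall>v. let Fv = {Q\<in>F. v \<in> \<Union>(edg Q)} in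
             Fv \<noteq> {} \<longrightarrow>
             (\<exists>qs. distinct qs \<and> set qs = Fv \<and>
                 (\<forall>i<length qs. edg (qs ! i) \<inter> edg (qs ! ((i + 1) mod length qs)) \<noteq> {}))))"

definition flat_points :: "point set \<Rightarrow> point set" where
  "flat_points P = {x \<in> frontier P. \<exists>U H. open U \<and> x \<in> U \<and> is_plane H \<and> U \<inter> frontier P \<subseteq> H}"

definition faces :: "point set \<Rightarrow> point set set" where
  "faces P = closure ` components (flat_points P)"

definition plane_of :: "point set \<Rightarrow> point set" where
  "plane_of F = affine hull F"

definition scene_planes :: "point set set \<Rightarrow> point set set" where
  "scene_planes S = {plane_of F | P F. P \<in> S \<and> F \<in> faces P}"

definition parallel_planes :: "point set \<Rightarrow> point set \<Rightarrow> bool" where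
  "parallel_planes R R' \<longleftrightarrow> (\<exists>v. R' = (\<lambda>x. v + x) ` R)"

definition cells :: "point set set \<Rightarrow> point set \<Rightarrow> point set set" where
  "cells Pl R = components (R - \<Union>{R \<inter> R' | R'. R' \<in> Pl \<and> \<not> parallel_planes R R'})"

end

theory Submission
  imports Defs
begin

text \<open>
  The proof has three layers.  (1) Local structure of boundaries: near a flat
  boundary point of a regular closed set the boundary is exactly a plane disc,
  so each face closure K of a polyhedron lies in one plane, K being relatively
  open in it; a non-flat boundary point lies on a second face plane.
  (2) The arrangement: the cells of a plane R are the components of R minus
  finitely many lines; they are finitely many, relatively open, and points off
  the lines are dense.  The main geometric claim is that a cell meeting a face
  of the same plane lies inside it, and therefore each face is the union of
  the closures of the cells it contains.
  (3) Finiteness gives a radius eps such that every cell contains a disc of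
  radius eps; markers that are eps-dense then mark every such cell, and sound
  markers mark only cells inside faces.
\<close>

lemma ball_avoiding_closed:
  fixes S :: "'a::metric_space set"
  assumes "closed S" "y \<notin> S" shows "\<exists>e>0. ball y e \<inter> S = {}"
proof -
  obtain e where "e > 0" "ball y e \<subseteq> - S"
    using open_contains_ball_eq[of "- S" y] assms by (auto simp: open_Compl)
  then show ?thesis by blast
qed

lemma is_plane_props:
  assumes "is_plane H"
  shows "affine H" "closed H" "convex H" "aff_dim H = 2" "affine hull H = H"
  using assms unfolding is_plane_def
  by (auto simp: affine_hyperplane closed_hyperplane convex_hyperplane)

lemma is_plane_affine_hull:
  fixes Q :: "point set"
  assumes "aff_dim Q = 2" shows "is_plane (affine hull Q)"
  using aff_dim_eq_hyperplane[of Q] assms unfolding is_plane_def by auto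

lemma plane_eq_if_disc_subset:
  assumes "is_plane H1" "is_plane H2" "z \<in> H1" "\<delta> > 0" "ball z \<delta> \<inter> H1 \<subseteq> H2"
  shows "H1 = H2"
proof -
  have "affine hull (H1 \<inter> ball z \<delta>) = H1"
    using assms(3,4) affine_hull_convex_Int_open[of H1 "ball z \<delta>"] is_plane_props[OF assms(1)]
    by (simp add: inf_commute) (metis centre_in_ball empty_iff IntI)
  moreover have "affine hull (H1 \<inter> ball z \<delta>) \<subseteq> H2"
    using assms(5) is_plane_props[OF assms(2)] by (metis hull_minimal inf_commute)
  ultimately have "H1 \<subseteq> H2" by simp
  moreover have "aff_dim H1 = aff_dim H2" using is_plane_props assms by simp
  ultimately show ?thesis
    using aff_dim_eq_full_gen[of H1 H2] is_plane_props assms by simp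
qed

lemma parallel_planes_refl: "parallel_planes R R"
  unfolding parallel_planes_def by (rule exI[of _ 0]) simp

lemma parallel_planes_meet_eq:
  assumes R: "is_plane R" and par: "parallel_planes R H" and y: "y \<in> R" "y \<in> H"
  shows "R = H"
proof -
  obtain n b where n: "R = {x. n \<bullet> x = b}" using R unfolding is_plane_def by blast
  obtain v where v: "H = (\<lambda>x. v + x) ` R" using par unfolding parallel_planes_def by blast
  obtain r where r: "r \<in> R" "y = v + r" using v y by blast
  have "n \<bullet> v = 0" using n r y by (simp add: inner_add_right)
  then have "v + x \<in> R \<longleftrightarrow> x \<in> R" for x using n by (simp add: inner_add_right)
  then show ?thesis using v by (auto simp: image_iff) (metis add_diff_cancel_left' diff_add_cancel)
qed

lemma approach_from_positive_side:
  fixes a z :: "'a::real_inner"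
  assumes "a \<noteq> 0" "open U" "z \<in> U" "e > 0"
  shows "\<exists>w\<in>U. dist z w < e \<and> a \<bullet> w > a \<bullet> z"
proof -
  obtain d where d: "d > 0" "ball z d \<subseteq> U" using assms(2,3) open_contains_ball by blast
  define t where "t = min e d / (2 * norm a)"
  have t: "t > 0" using assms d by (simp add: t_def)
  define w where "w = z + t *\<^sub>R a"
  have "dist z w = min e d / 2" using assms t d by (simp add: w_def dist_norm t_def)
  then have "dist z w < e" "w \<in> U" using assms d by (auto simp: dist_commute)
  moreover have "a \<bullet> w = a \<bullet> z + t * (a \<bullet> a)" by (simp add: w_def inner_add_right)
  then have "a \<bullet> w > a \<bullet> z" using t assms by simp
  ultimately show ?thesis by blast
qed

lemma plane_point_in_frontier:
  fixes P :: "'a::real_inner set"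
  assumes "a \<noteq> 0" "open U" "z \<in> U" "a \<bullet> z = b"
    and "U \<inter> {x. a \<bullet> x > b} \<subseteq> P" "U \<inter> {x. a \<bullet> x < b} \<inter> P = {}"
  shows "z \<in> frontier P"
  unfolding frontier_straddle
proof (intro allI impI conjI)
  fix e :: real assume "e > 0"
  then obtain w1 w2 where "w1 \<in> U" "dist z w1 < e" "a \<bullet> w1 > a \<bullet> z"
    and "w2 \<in> U" "dist z w2 < e" "(-a) \<bullet> w2 > (-a) \<bullet> z"
    using approach_from_positive_side[of a U z e] approach_from_positive_side[of "-a" U z e]
      assms(1-3) by auto
  then show "\<exists>x\<in>P. dist z x < e" "\<exists>x. x \<notin> P \<and> dist z x < e"
    using assms(4-6) by auto
qed

lemma half_balls_in_closed_set:
  fixes P :: "'a::real_inner set"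
  assumes cl: "closed P" and a: "a \<noteq> 0"
    and pos: "ball y r \<inter> {x. a \<bullet> x > b} \<subseteq> P" and neg: "ball y r \<inter> {x. a \<bullet> x < b} \<subseteq> P"
  shows "ball y r \<subseteq> P"
proof
  fix x assume x: "x \<in> ball y r"
  show "x \<in> P"
  proof (cases "a \<bullet> x = b")
    case True
    have "x \<in> closure P"
      unfolding closure_approachable
      using approach_from_positive_side[OF a open_ball x] pos True by (fastforce simp: dist_commute)
    then show ?thesis using cl by simp
  next
    case False
    then show ?thesis using x pos neg by (auto simp: neq_iff)
  qed
qed

lemma interior_point_meets_open_side:
  fixes P :: "'a::real_inner set"
  assumes a: "a \<noteq> 0" and w: "w \<in> interior P" "w \<in> ball y r"
  shows "ball y r \<inter> {x. a \<bullet> x \<noteq> b} \<inter> P \<noteq> {}"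
proof (cases "a \<bullet> w = b")
  case True
  obtain e where e: "e > 0" "ball w e \<subseteq> P" using w(1) by (meson mem_interior)
  obtain v where "v \<in> ball y r" "dist w v < e" "a \<bullet> v > a \<bullet> w"
    using approach_from_positive_side[OF a open_ball w(2) e(1)] by blast
  then show ?thesis using e True by fastforce
next
  case False
  then show ?thesis using w interior_subset by blast
qed

text \<open>Each
  open half ball misses the frontier, so lies inside or outside P; regularity rules
  out both inside (y would be interior) and both outside (P would be thin).\<close>
lemma locally_flat_frontier_fills_plane:
  fixes P :: "'a::real_inner set"
  assumes cl: "closed P" and reg: "P = closure (interior P)" and yf: "y \<in> frontier P"
    and a: "a \<noteq> 0" and r: "r > 0"
    and flat: "ball y r \<inter> frontier P \<subseteq> {x. a \<bullet> x = b}"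
  shows "ball y r \<inter> {x. a \<bullet> x = b} \<subseteq> frontier P"
proof -
  define Bp where "Bp = ball y r \<inter> {x. a \<bullet> x > b}"
  define Bm where "Bm = ball y r \<inter> {x. a \<bullet> x < b}"
  have side: "B \<subseteq> P \<or> B \<inter> P = {}" if "B \<in> {Bp, Bm}" for B
  proof -
    have "connected B" "B \<inter> frontier P = {}" using that flat unfolding Bp_def Bm_def
      by (auto intro!: convex_connected convex_Int convex_halfspace_gt convex_halfspace_lt)
    then show ?thesis using connected_Int_frontier[of B P] by blast
  qed
  have "\<not> (Bp \<subseteq> P \<and> Bm \<subseteq> P)"
  proof
    assume "Bp \<subseteq> P \<and> Bm \<subseteq> P"
    then have "ball y r \<subseteq> P" using half_balls_in_closed_set[OF cl a] unfolding Bp_def Bm_def by blast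
    then have "y \<in> interior P" using r by (meson centre_in_ball interior_maximal open_ball subsetD)
    then show False using yf by (simp add: frontier_def)
  qed
  moreover have "\<not> (Bp \<inter> P = {} \<and> Bm \<inter> P = {})"
  proof
    assume outside: "Bp \<inter> P = {} \<and> Bm \<inter> P = {}"
    have "y \<in> closure (interior P)" using yf cl reg frontier_subset_closed by auto
    then obtain w where "w \<in> interior P" "w \<in> ball y r"
      using r unfolding closure_approachable by (metis dist_commute mem_ball)
    then have "ball y r \<inter> {x. a \<bullet> x \<noteq> b} \<inter> P \<noteq> {}"
      by (rule interior_point_meets_open_side[OF a])
    then show False using outside by (auto simp: Bp_def Bm_def neq_iff)
  qed
  ultimately have "(Bp \<subseteq> P \<and> Bm \<inter> P = {}) \<or> (Bm \<subseteq> P \<and> Bp \<inter> P = {})"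
    using side by blast
  then show ?thesis
  proof
    assume "Bp \<subseteq> P \<and> Bm \<inter> P = {}"
    then show ?thesis
      using plane_point_in_frontier[OF a open_ball] by (auto simp: Bp_def Bm_def)
  next
    assume "Bm \<subseteq> P \<and> Bp \<inter> P = {}"
    then show ?thesis
      using plane_point_in_frontier[of "-a" "ball y r" _ "-b" P] a by (auto simp: Bp_def Bm_def)
  qed
qed

definition flat_at :: "point set \<Rightarrow> point \<Rightarrow> point set \<Rightarrow> real \<Rightarrow> bool" where
  "flat_at P z H r \<longleftrightarrow> r > 0 \<and> is_plane H \<and> ball z r \<inter> frontier P = ball z r \<inter> H"

lemma flat_points_subset_frontier: "flat_points P \<subseteq> frontier P"
  unfolding flat_points_def by blast

lemma flat_points_flat_at:
  assumes "closed P" "P = closure (interior P)" "z \<in> flat_points P"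
  shows "\<exists>H r. flat_at P z H r"
proof -
  obtain U H where U: "open U" "z \<in> U" "is_plane H" "U \<inter> frontier P \<subseteq> H" and zf: "z \<in> frontier P"
    using assms(3) unfolding flat_points_def by blast
  obtain r where r: "r > 0" "ball z r \<subseteq> U" using U by (meson open_contains_ball)
  obtain a b where ab: "a \<noteq> 0" "H = {x. a \<bullet> x = b}" using U(3) unfolding is_plane_def by blast
  have sub: "ball z r \<inter> frontier P \<subseteq> {x. a \<bullet> x = b}" using r U ab by blast
  moreover have "ball z r \<inter> {x. a \<bullet> x = b} \<subseteq> frontier P"
    using locally_flat_frontier_fills_plane[OF assms(1,2) zf ab(1) r(1) sub] by blast
  ultimately have "flat_at P z H r" using r U ab unfolding flat_at_def by blast
  then show ?thesis by blast
qed

lemma flat_at_frontier_in_plane: "flat_at P z H r \<Longrightarrow> ball z r \<inter> frontier P \<subseteq> H"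
  unfolding flat_at_def by (elim conjE) simp

lemma flat_at_imp_flat_points:
  assumes "flat_at P z H r" shows "ball z r \<inter> H \<subseteq> flat_points P"
  using assms unfolding flat_at_def flat_points_def by (blast intro: open_ball)

lemma flat_at_shrink:
  assumes "flat_at P z H r" "w \<in> ball z r" shows "\<exists>r'. flat_at P w H r'"
proof -
  define r' where "r' = r - dist z w"
  have "r' > 0" using assms(2) by (simp add: r'_def)
  moreover have "ball w r' \<subseteq> ball z r"
    unfolding r'_def using ball_subset_ball_iff[of w "r - dist z w" z r] by (simp add: dist_commute)
  ultimately show ?thesis using assms(1) unfolding flat_at_def by blast
qed

lemma flat_at_center: "flat_at P z H r \<Longrightarrow> z \<in> frontier P \<Longrightarrow> z \<in> H"
  unfolding flat_at_def by (metis IntD2 IntI centre_in_ball)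

lemma flat_at_unique_plane:
  assumes "z \<in> frontier P" "flat_at P z H1 r1" "flat_at P z H2 r2" shows "H1 = H2"
proof -
  have "x \<in> H2" if x: "x \<in> ball z (min r1 r2)" "x \<in> H1" for x
  proof -
    have eq1: "ball z r1 \<inter> frontier P = ball z r1 \<inter> H1"
      and eq2: "ball z r2 \<inter> frontier P = ball z r2 \<inter> H2"
      using assms(2,3) unfolding flat_at_def by auto
    have "x \<in> ball z r1" "x \<in> ball z r2" using x by auto
    then show ?thesis using eq1 eq2 x(2) by (metis Int_iff)
  qed
  then have "ball z (min r1 r2) \<inter> H1 \<subseteq> H2" by blast
  then show ?thesis
    using plane_eq_if_disc_subset[of H1 H2 z "min r1 r2"] flat_at_center[OF assms(2,1)] assms(2,3)
    unfolding flat_at_def by simp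
qed

text \<open>A connected component of the flat points has a single plane of flatness,
  since the plane is locally constant.\<close>
lemma flat_component_single_plane:
  assumes cl: "closed P" and reg: "P = closure (interior P)"
    and K: "K \<in> components (flat_points P)"
  shows "\<exists>H. \<forall>z\<in>K. \<exists>r. flat_at P z H r"
proof -
  have Kflat: "K \<subseteq> flat_points P" using K by (rule in_components_subset)
  obtain z0 where z0: "z0 \<in> K" using in_components_nonempty[OF K] by blast
  obtain H0 r0 where H0: "flat_at P z0 H0 r0" using flat_points_flat_at[OF cl reg] z0 Kflat by blast
  have "\<exists>r. flat_at P z H0 r" if z: "z \<in> K" for z
  proof (rule connected_induction_simple[OF in_components_connected[OF K] z0 z])
    show "\<exists>r. flat_at P z0 H0 r" using H0 by blast
    fix a assume a: "a \<in> K"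
    obtain H r where Hr: "flat_at P a H r" using flat_points_flat_at[OF cl reg] a Kflat by blast
    have "\<exists>r. flat_at P y H0 r" if x: "x \<in> K \<inter> ball a r" and y: "y \<in> K \<inter> ball a r"
      and x0: "flat_at P x H0 rx" for x y rx
    proof -
      obtain rx' where "flat_at P x H rx'" using flat_at_shrink[OF Hr] x by blast
      moreover have "x \<in> frontier P" using x Kflat flat_points_subset_frontier by blast
      ultimately have "H0 = H" using flat_at_unique_plane x0 by blast
      then show ?thesis using flat_at_shrink[OF Hr] y by blast
    qed
    moreover have "a \<in> K \<inter> ball a r" using a Hr unfolding flat_at_def by simp
    ultimately show "\<exists>T. openin (top_of_set K) T \<and> a \<in> T \<and>
                       (\<forall>x\<in>T. \<forall>y\<in>T. (\<exists>r. flat_at P x H0 r) \<longrightarrow> (\<exists>r. flat_at P y H0 r))"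
      by (intro exI[of _ "K \<inter> ball a r"]) (auto simp: openin_open_Int)
  qed
  then show ?thesis by blast
qed

lemma flat_component_open_in_plane:
  assumes cl: "closed P" and reg: "P = closure (interior P)"
    and K: "K \<in> components (flat_points P)"
  shows "\<exists>H. is_plane H \<and> (\<forall>z\<in>K. \<exists>r. flat_at P z H r) \<and> K \<subseteq> H \<and>
            (\<forall>z\<in>K. \<exists>r>0. ball z r \<inter> H \<subseteq> K) \<and> affine hull (closure K) = H"
proof -
  have Kfr: "K \<subseteq> frontier P"
    using in_components_subset[OF K] flat_points_subset_frontier by blast
  obtain H where H: "\<forall>z\<in>K. \<exists>r. flat_at P z H r"
    using flat_component_single_plane[OF cl reg K] by blast
  obtain z0 where z0: "z0 \<in> K" using in_components_nonempty[OF K] by blast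
  have pl: "is_plane H" using H z0 unfolding flat_at_def by blast
  have KH: "K \<subseteq> H" using H flat_at_center Kfr by blast
  have disc: "\<exists>r>0. ball z r \<inter> H \<subseteq> K" if z: "z \<in> K" for z
  proof -
    obtain r where r: "flat_at P z H r" using H z by blast
    have "connected (ball z r \<inter> H)"
      using is_plane_props(3)[OF pl] by (intro convex_connected convex_Int convex_ball)
    moreover have "K \<inter> (ball z r \<inter> H) \<noteq> {}" using z KH r unfolding flat_at_def by auto
    ultimately have "ball z r \<inter> H \<subseteq> K"
      using components_maximal[OF K] flat_at_imp_flat_points[OF r] by blast
    then show ?thesis using r unfolding flat_at_def by blast
  qed
  have "affine hull (closure K) \<subseteq> H"
    using KH is_plane_props[OF pl] by (meson closure_minimal hull_minimal)
  moreover have "H \<subseteq> affine hull (closure K)"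
  proof -
    obtain r where r: "r > 0" "ball z0 r \<inter> H \<subseteq> K" using disc z0 by blast
    have "H \<inter> ball z0 r \<noteq> {}" using r z0 KH by auto
    then have "affine hull (H \<inter> ball z0 r) = H"
      using affine_hull_convex_Int_open[of H "ball z0 r"] is_plane_props[OF pl] by simp
    moreover have "affine hull (H \<inter> ball z0 r) \<subseteq> affine hull (closure K)"
      using r closure_subset by (intro hull_mono) blast
    ultimately show ?thesis by simp
  qed
  ultimately have "affine hull (closure K) = H" by (rule antisym)
  with pl H KH disc show ?thesis by (intro exI[of _ H] conjI) auto
qed

lemma polyhedron_regular_closed:
  assumes "polyhedron P"
  shows "compact P" "closed P" "P = closure (interior P)"
proof -
  have "compact P \<and> P = closure (interior P)"
    using assms unfolding polyhedron_def by (elim conjE) (intro conjI)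
  then show "compact P" "P = closure (interior P)" "closed P" by (auto intro: compact_imp_closed)
qed

lemma polygon_with_props:
  assumes "polygon_with Q E"
  shows "closed Q" "aff_dim Q = 2" "Q = closure (rel_interior Q)"
    "rel_frontier Q = \<Union> ((\<lambda>e. convex hull e) ` E)"
proof -
  have "compact Q \<and> aff_dim Q = 2 \<and> Q = closure (rel_interior Q) \<and>
      rel_frontier Q = \<Union> ((\<lambda>e. convex hull e) ` E)"
    using assms unfolding polygon_with_def by (elim conjE) (intro conjI)
  then show "closed Q" "aff_dim Q = 2" "Q = closure (rel_interior Q)"
    "rel_frontier Q = \<Union> ((\<lambda>e. convex hull e) ` E)" by (auto intro: compact_imp_closed)
qed

lemma polyhedron_polygon_cover:
  assumes "polyhedron P"
  shows "\<exists>Fs. finite Fs \<and> frontier P = \<Union>Fs \<and>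
     (\<forall>Q\<in>Fs. closed Q \<and> aff_dim Q = 2 \<and> Q = closure (rel_interior Q)) \<and>
     (\<forall>Q\<in>Fs. \<forall>Q'\<in>Fs. Q \<noteq> Q' \<longrightarrow> rel_interior Q \<inter> Q' = {})"
proof -
  obtain Fs edg where fin: "finite Fs" and pw: "\<forall>Q\<in>Fs. polygon_with Q (edg Q)"
    and fr: "frontier P = \<Union>Fs"
    and meet: "\<forall>Q\<in>Fs. \<forall>Q'\<in>Fs. Q \<noteq> Q' \<longrightarrow>
            Q \<inter> Q' \<subseteq> \<Union> ((\<lambda>e. convex hull e) ` (edg Q \<inter> edg Q')) \<union> (\<Union>(edg Q) \<inter> \<Union>(edg Q'))"
    using assms unfolding polyhedron_def by (elim conjE exE) (rule that)
  have "rel_interior Q \<inter> Q' = {}" if QQ': "Q \<in> Fs" "Q' \<in> Fs" "Q \<noteq> Q'" for Q Q'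
  proof -
    have rf: "rel_frontier Q = \<Union> ((\<lambda>e. convex hull e) ` edg Q)"
      using pw QQ' polygon_with_props(4) by blast
    have "\<Union>(edg Q) \<subseteq> rel_frontier Q" unfolding rf using hull_subset by fastforce
    moreover have "\<Union> ((\<lambda>e. convex hull e) ` (edg Q \<inter> edg Q')) \<subseteq> rel_frontier Q"
      unfolding rf by blast
    moreover have "Q \<inter> Q' \<subseteq> \<Union> ((\<lambda>e. convex hull e) ` (edg Q \<inter> edg Q')) \<union> (\<Union>(edg Q) \<inter> \<Union>(edg Q'))"
      using meet QQ' by blast
    ultimately have "Q \<inter> Q' \<subseteq> rel_frontier Q" by blast
    then show ?thesis using rel_interior_subset unfolding rel_frontier_def by blast
  qed
  moreover have "\<forall>Q\<in>Fs. closed Q \<and> aff_dim Q = 2 \<and> Q = closure (rel_interior Q)"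
    using pw polygon_with_props(1-3) by blast
  ultimately show ?thesis using fin fr by blast
qed

lemma face_in_plane: "F \<subseteq> plane_of F"
  unfolding plane_of_def by (rule hull_subset)

lemma face_structure:
  assumes P: "polyhedron P" and F: "F \<in> faces P"
  shows "\<exists>K. K \<in> components (flat_points P) \<and> F = closure K \<and> is_plane (plane_of F) \<and>
     (\<forall>z\<in>K. \<exists>r. flat_at P z (plane_of F) r) \<and> K \<subseteq> plane_of F \<and>
     (\<forall>z\<in>K. \<exists>r>0. ball z r \<inter> plane_of F \<subseteq> K) \<and> F \<subseteq> frontier P \<and> compact F \<and> F \<noteq> {}"
proof -
  obtain K where K: "K \<in> components (flat_points P)" "F = closure K"
    using F unfolding faces_def by blast
  obtain H where H: "is_plane H" "\<forall>z\<in>K. \<exists>r. flat_at P z H r" "K \<subseteq> H"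
     "\<forall>z\<in>K. \<exists>r>0. ball z r \<inter> H \<subseteq> K" "affine hull (closure K) = H"
    using flat_component_open_in_plane[OF polyhedron_regular_closed(2,3)[OF P] K(1)] by blast
  have "K \<subseteq> frontier P"
    using in_components_subset[OF K(1)] flat_points_subset_frontier by blast
  then have "F \<subseteq> frontier P" using K(2) by (simp add: closure_minimal)
  have "bounded K"
    using \<open>K \<subseteq> frontier P\<close> compact_frontier[OF polyhedron_regular_closed(1)[OF P]]
    by (meson bounded_subset compact_imp_bounded)
  moreover have "F \<noteq> {}" using K in_components_nonempty by auto
  ultimately show ?thesis
    using K H \<open>F \<subseteq> frontier P\<close> by (auto simp: plane_of_def compact_closure)
qed

text \<open>Near a relative interior point of a boundary polygon Q the boundary is Q itself,
  since the other polygons form a closed set avoiding that point.\<close>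
lemma polygon_interior_point_locally_flat:
  assumes fr: "frontier P = \<Union>Fs" and fin: "finite Fs"
    and polys: "\<forall>Q\<in>Fs. closed Q \<and> aff_dim Q = 2 \<and> Q = closure (rel_interior Q)"
    and disj: "\<forall>Q\<in>Fs. \<forall>Q'\<in>Fs. Q \<noteq> Q' \<longrightarrow> rel_interior Q \<inter> Q' = {}"
    and Q: "Q \<in> Fs" and z: "z \<in> rel_interior Q"
  shows "\<exists>\<rho>>0. ball z \<rho> \<inter> frontier P \<subseteq> affine hull Q"
proof -
  have "closed (\<Union>(Fs - {Q}))" using fin polys by (intro closed_Union) auto
  moreover have "z \<notin> \<Union>(Fs - {Q})" using disj Q z by blast
  ultimately obtain \<rho> where \<rho>: "\<rho> > 0" "ball z \<rho> \<inter> \<Union>(Fs - {Q}) = {}"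
    using ball_avoiding_closed[of "\<Union>(Fs - {Q})" z] by blast
  have "ball z \<rho> \<inter> frontier P \<subseteq> affine hull Q"
  proof
    fix x assume x: "x \<in> ball z \<rho> \<inter> frontier P"
    then obtain X where X: "X \<in> Fs" "x \<in> X" using fr by blast
    then have "X = Q" using \<rho> x by auto
    then show "x \<in> affine hull Q" using X hull_subset[of Q affine] by blast
  qed
  then show ?thesis using \<rho>(1) by blast
qed

text \<open>The plane of every boundary polygon is the plane of some face: a relative
  interior point of the polygon is flat with that plane.\<close>
lemma polygon_plane_is_face_plane:
  assumes P: "polyhedron P" and fr: "frontier P = \<Union>Fs" and fin: "finite Fs"
    and polys: "\<forall>Q\<in>Fs. closed Q \<and> aff_dim Q = 2 \<and> Q = closure (rel_interior Q)"
    and disj: "\<forall>Q\<in>Fs. \<forall>Q'\<in>Fs. Q \<noteq> Q' \<longrightarrow> rel_interior Q \<inter> Q' = {}"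
    and Q: "Q \<in> Fs"
  shows "\<exists>F\<in>faces P. plane_of F = affine hull Q"
proof -
  define H where "H = affine hull Q"
  have Hp: "is_plane H" unfolding H_def using polys Q is_plane_affine_hull by blast
  have "Q \<noteq> {}" using polys Q by force
  then obtain z where z: "z \<in> rel_interior Q" using polys Q by (metis closure_empty ex_in_conv)
  obtain \<rho> where \<rho>: "\<rho> > 0" "ball z \<rho> \<inter> frontier P \<subseteq> H"
    using polygon_interior_point_locally_flat[OF fr fin polys disj Q z] unfolding H_def by blast
  have zf: "z \<in> frontier P" using z rel_interior_subset Q fr by blast
  have "open (ball z \<rho>)" "z \<in> ball z \<rho>" using \<rho> by auto
  then have zflat: "z \<in> flat_points P"
    using zf \<rho>(2) Hp unfolding flat_points_def by blast
  define K where "K = connected_component_set (flat_points P) z"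
  have K: "K \<in> components (flat_points P)" "z \<in> K"
    using zflat unfolding K_def components_iff by auto
  obtain H' where H': "is_plane H'" "\<forall>z\<in>K. \<exists>r. flat_at P z H' r" "affine hull (closure K) = H'"
    using flat_component_open_in_plane[OF polyhedron_regular_closed(2,3)[OF P] K(1)] by blast
  obtain r where r: "flat_at P z H' r" using H' K by blast
  have "ball z (min r \<rho>) \<inter> H' \<subseteq> ball z \<rho> \<inter> frontier P"
    using flat_at_imp_flat_points[OF r] flat_points_subset_frontier[of P] by fastforce
  then have "ball z (min r \<rho>) \<inter> H' \<subseteq> H" using \<rho>(2) by blast
  moreover have "min r \<rho> > 0" using r \<rho> unfolding flat_at_def by simp
  ultimately have "H' = H"
    using plane_eq_if_disc_subset[OF H'(1) Hp flat_at_center[OF r zf]] by blast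
  moreover have "closure K \<in> faces P" using K unfolding faces_def by blast
  ultimately show ?thesis using H' unfolding plane_of_def H_def by metis
qed

lemma face_plane_is_polygon_plane:
  assumes P: "polyhedron P" and F: "F \<in> faces P" and fr: "frontier P = \<Union>Fs"
    and polys: "\<forall>Q\<in>Fs. closed Q \<and> aff_dim Q = 2 \<and> Q = closure (rel_interior Q)"
  shows "\<exists>Q\<in>Fs. affine hull Q = plane_of F"
proof -
  obtain K where K: "K \<in> components (flat_points P)" "\<forall>z\<in>K. \<exists>r. flat_at P z (plane_of F) r"
    "is_plane (plane_of F)"
    using face_structure[OF P F] by blast
  obtain z where z: "z \<in> K" using in_components_nonempty[OF K(1)] by blast
  obtain r where r: "flat_at P z (plane_of F) r" using K z by blast
  have "z \<in> frontier P" using in_components_subset[OF K(1)] z flat_points_subset_frontier by blast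
  then obtain Q where Q: "Q \<in> Fs" "z \<in> Q" using fr by blast
  have rpos: "r > 0" using r unfolding flat_at_def by blast
  have "z \<in> closure (rel_interior Q)" using polys Q by blast
  then obtain w where w: "w \<in> rel_interior Q" "dist w z < r"
    using rpos unfolding closure_approachable by blast
  then obtain e where e: "e > 0" "ball w e \<inter> affine hull Q \<subseteq> Q"
    unfolding mem_rel_interior_ball by blast
  define \<delta> where "\<delta> = min e (r - dist z w)"
  have \<delta>: "\<delta> > 0" using e w by (simp add: \<delta>_def dist_commute)
  have "ball w \<delta> \<inter> affine hull Q \<subseteq> ball z r \<inter> frontier P"
  proof
    fix x assume x: "x \<in> ball w \<delta> \<inter> affine hull Q"
    then have "x \<in> Q" using e by (auto simp: \<delta>_def)
    moreover have "dist z x < r"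
      using x dist_triangle[of z x w] by (simp add: \<delta>_def)
    ultimately show "x \<in> ball z r \<inter> frontier P" using Q fr by auto
  qed
  then have "ball w \<delta> \<inter> affine hull Q \<subseteq> plane_of F" using flat_at_frontier_in_plane[OF r] by blast
  moreover have "is_plane (affine hull Q)" using polys Q by (simp add: is_plane_affine_hull)
  moreover have "w \<in> affine hull Q" using w(1) by (meson hull_inc rel_interior_subset subsetD)
  ultimately have "affine hull Q = plane_of F" using plane_eq_if_disc_subset[OF _ K(3) _ \<delta>] by blast
  then show ?thesis using Q by blast
qed

lemma face_planes_finite:
  assumes P: "polyhedron P" shows "finite (plane_of ` faces P)"
proof -
  obtain Fs where fin: "finite Fs" and fr: "frontier P = \<Union>Fs"
    and polys: "\<forall>Q\<in>Fs. closed Q \<and> aff_dim Q = 2 \<and> Q = closure (rel_interior Q)"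
    using polyhedron_polygon_cover[OF P] by (elim exE conjE) (rule that)
  have "plane_of ` faces P \<subseteq> (\<lambda>Q. affine hull Q) ` Fs"
    using face_plane_is_polygon_plane[OF P _ fr polys] by fastforce
  then show ?thesis using fin finite_subset by blast
qed

lemma scene_planes_finite_planes:
  assumes "finite S" "\<forall>P\<in>S. polyhedron P"
  shows "finite (scene_planes S)" "\<forall>R\<in>scene_planes S. is_plane R"
proof -
  have "scene_planes S = (\<Union>P\<in>S. plane_of ` faces P)" unfolding scene_planes_def by blast
  then show "finite (scene_planes S)" using assms face_planes_finite by simp
  show "\<forall>R\<in>scene_planes S. is_plane R"
    unfolding scene_planes_def using face_structure assms(2) by blast
qed

text \<open>A non-flat boundary point lies on a boundary polygon not contained in a
  given plane R, hence on a face plane different from R.\<close>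
lemma nonflat_point_on_other_face_plane:
  assumes P: "polyhedron P" and yf: "y \<in> frontier P" and ynf: "y \<notin> flat_points P"
    and R: "is_plane R"
  shows "\<exists>F'\<in>faces P. y \<in> plane_of F' \<and> plane_of F' \<noteq> R"
proof -
  obtain Fs where fin: "finite Fs" and fr: "frontier P = \<Union>Fs"
    and polys: "\<forall>Q\<in>Fs. closed Q \<and> aff_dim Q = 2 \<and> Q = closure (rel_interior Q)"
    and disj: "\<forall>Q\<in>Fs. \<forall>Q'\<in>Fs. Q \<noteq> Q' \<longrightarrow> rel_interior Q \<inter> Q' = {}"
    using polyhedron_polygon_cover[OF P] by (elim exE conjE) (rule that)
  have "\<exists>Q\<in>Fs. y \<in> Q \<and> \<not> Q \<subseteq> R"
  proof (rule ccontr)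
    assume all_in_R: "\<not> (\<exists>Q\<in>Fs. y \<in> Q \<and> \<not> Q \<subseteq> R)"
    define A where "A = {Q\<in>Fs. y \<notin> Q}"
    have "closed (\<Union>A)" using fin polys unfolding A_def by (intro closed_Union) auto
    moreover have "y \<notin> \<Union>A" unfolding A_def by blast
    ultimately obtain e where e: "e > 0" "ball y e \<inter> \<Union>A = {}"
      using ball_avoiding_closed[of "\<Union>A" y] by blast
    have "ball y e \<inter> frontier P \<subseteq> R"
    proof
      fix x assume x: "x \<in> ball y e \<inter> frontier P"
      then obtain Q where Q: "Q \<in> Fs" "x \<in> Q" using fr by blast
      then have "y \<in> Q" using x e unfolding A_def by blast
      then show "x \<in> R" using all_in_R Q by blast
    qed
    moreover have "open (ball y e)" "y \<in> ball y e" using e by auto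
    ultimately have "y \<in> flat_points P" using yf R unfolding flat_points_def by blast
    then show False using ynf by blast
  qed
  then obtain Q where Q: "Q \<in> Fs" "y \<in> Q" "\<not> Q \<subseteq> R" by blast
  obtain F' where F': "F' \<in> faces P" "plane_of F' = affine hull Q"
    using polygon_plane_is_face_plane[OF P fr fin polys disj Q(1)] by blast
  have "y \<in> plane_of F'" using F'(2) Q(2) by (simp add: hull_inc)
  moreover have "plane_of F' \<noteq> R" using F'(2) Q(3) hull_subset[of Q affine] by auto
  ultimately show ?thesis using F'(1) by blast
qed

definition arrangement_lines :: "point set set \<Rightarrow> point set \<Rightarrow> point set" where
  "arrangement_lines Pl R = \<Union>{R \<inter> R' | R'. R' \<in> Pl \<and> \<not> parallel_planes R R'}"

lemma cells_arrangement: "cells Pl R = components (R - arrangement_lines Pl R)"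
  unfolding cells_def arrangement_lines_def by simp

lemma arrangement_lines_iff:
  "y \<in> arrangement_lines Pl R \<longleftrightarrow> (\<exists>R'\<in>Pl. \<not> parallel_planes R R' \<and> y \<in> R \<and> y \<in> R')"
  unfolding arrangement_lines_def by blast

lemma arrangement_lines_closed:
  assumes "finite Pl" "\<forall>R'\<in>Pl. is_plane R'" "is_plane R"
  shows "closed (arrangement_lines Pl R)"
proof -
  have lines: "arrangement_lines Pl R = (\<Union>R'\<in>{R'\<in>Pl. \<not> parallel_planes R R'}. R \<inter> R')"
    unfolding arrangement_lines_def by blast
  show ?thesis
    unfolding lines using assms is_plane_props(2) by (intro closed_UN closed_Int) auto
qed

lemma finite_closed_union_codense:
  fixes R :: "'a::metric_space set"
  assumes "finite \<A>" "\<forall>A\<in>\<A>. closed A" "\<forall>A\<in>\<A>. \<forall>z\<in>R. \<forall>\<delta>>0. \<not> ball z \<delta> \<inter> R \<subseteq> A"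
  shows "\<forall>z\<in>R. \<forall>\<delta>>0. \<exists>y\<in>R. dist z y < \<delta> \<and> y \<notin> \<Union>\<A>"
  using assms
proof (induction \<A> rule: finite_induct)
  case empty
  have "z \<in> R \<Longrightarrow> \<delta> > 0 \<Longrightarrow> \<exists>y\<in>R. dist z y < \<delta> \<and> y \<notin> \<Union>{}" for z and \<delta> :: real
    by (intro bexI[of _ z]) auto
  then show ?case by blast
next
  case (insert A \<A>)
  have IH: "\<forall>z\<in>R. \<forall>\<delta>>0. \<exists>y\<in>R. dist z y < \<delta> \<and> y \<notin> \<Union>\<A>"
    using insert.IH insert.prems by blast
  show ?case
  proof (intro ballI allI impI)
    fix z \<delta> assume z: "z \<in> R" and \<delta>: "(\<delta>::real) > 0"
    have "\<not> ball z \<delta> \<inter> R \<subseteq> A" using insert.prems(2) z \<delta> by blast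
    then obtain y1 where "y1 \<in> ball z \<delta> \<inter> R" "y1 \<notin> A" by blast
    then have y1: "y1 \<in> R" "dist z y1 < \<delta>" "y1 \<notin> A" by auto
    obtain e where e: "e > 0" "ball y1 e \<inter> A = {}"
      using ball_avoiding_closed[of A y1] insert.prems y1(3) by blast
    have "min e (\<delta> - dist z y1) > 0" using e y1 by simp
    then obtain y where y: "y \<in> R" "dist y1 y < min e (\<delta> - dist z y1)" "y \<notin> \<Union>\<A>"
      using IH y1(1) by blast
    have "y \<notin> A" using y(2) e by auto
    moreover have "dist z y < \<delta>" using y(2) dist_triangle[of z y y1] by linarith
    ultimately show "\<exists>y\<in>R. dist z y < \<delta> \<and> y \<notin> \<Union>(insert A \<A>)" using y by blast
  qed
qed

text \<open>Points of R off the arrangement lines are dense in R, since a line of the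
  arrangement contains no disc of R.\<close>
lemma dense_off_arrangement_lines:
  assumes fin: "finite Pl" and pl: "\<forall>R'\<in>Pl. is_plane R'" and R: "is_plane R"
    and w: "w \<in> R" and \<rho>: "\<rho> > 0"
  shows "\<exists>y\<in>R. dist w y < \<rho> \<and> y \<notin> arrangement_lines Pl R"
proof -
  define \<A> where "\<A> = (\<lambda>R'. R \<inter> R') ` {R'\<in>Pl. \<not> parallel_planes R R'}"
  have "\<not> ball z \<delta> \<inter> R \<subseteq> R \<inter> R'"
    if "R' \<in> Pl" "\<not> parallel_planes R R'" "z \<in> R" "\<delta> > 0" for R' z \<delta>
    using plane_eq_if_disc_subset[of R R' z \<delta>] parallel_planes_refl R pl that by auto
  then have "\<forall>z\<in>R. \<forall>\<delta>>0. \<exists>y\<in>R. dist z y < \<delta> \<and> y \<notin> \<Union>\<A>"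
    using fin pl R is_plane_props(2)
    by (intro finite_closed_union_codense) (auto simp: \<A>_def)
  moreover have "\<Union>\<A> = arrangement_lines Pl R" unfolding \<A>_def arrangement_lines_def by blast
  ultimately show ?thesis using w \<rho> by auto
qed

lemma cell_basic:
  assumes "C \<in> cells Pl R" shows "connected C" "C \<subseteq> R - arrangement_lines Pl R" "C \<noteq> {}"
  using assms unfolding cells_arrangement
  by (auto dest: in_components_connected in_components_subset in_components_nonempty)

lemma cell_exists:
  assumes "y \<in> R - arrangement_lines Pl R" shows "\<exists>C\<in>cells Pl R. y \<in> C"
  unfolding cells_arrangement using assms
  by (intro bexI[of _ "connected_component_set (R - arrangement_lines Pl R) y"])
     (auto simp: components_iff)

lemma cell_contains_disc:
  assumes "finite Pl" "\<forall>R'\<in>Pl. is_plane R'" "is_plane R" "C \<in> cells Pl R" "c \<in> C"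
  shows "\<exists>\<delta>>0. ball c \<delta> \<inter> R \<subseteq> C"
proof -
  have c: "c \<in> R - arrangement_lines Pl R" using cell_basic(2)[OF assms(4)] assms(5) by blast
  then obtain d where d: "d > 0" "ball c d \<inter> arrangement_lines Pl R = {}"
    using ball_avoiding_closed[OF arrangement_lines_closed[OF assms(1-3)]] by blast
  have "connected (ball c d \<inter> R)"
    using is_plane_props(3)[OF assms(3)] by (intro convex_connected convex_Int convex_ball)
  moreover have "C \<inter> (ball c d \<inter> R) \<noteq> {}" using assms(5) c d by auto
  ultimately have "ball c d \<inter> R \<subseteq> C"
    using components_maximal[of C "R - arrangement_lines Pl R"] assms(4) d
    unfolding cells_arrangement by blast
  then show ?thesis using d by blast
qed

text \<open>A convex set minus finitely many hyperplanes has finitely many components: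
  each component is determined by the side of each hyperplane it lies on.\<close>
lemma finite_components_off_hyperplanes:
  fixes R :: "'a::real_inner set" and a :: "'i \<Rightarrow> 'a"
  assumes R: "convex R" and N: "finite N"
  shows "finite (components (R - {x. \<exists>i\<in>N. a i \<bullet> x = b i}))"
proof -
  define L where "L = {x. \<exists>i\<in>N. a i \<bullet> x = b i}"
  define side where "side = (\<lambda>x. {i\<in>N. b i < a i \<bullet> x})"
  define region where "region = (\<lambda>T. R \<inter> (\<Inter>i\<in>N.
     if i \<in> T then {x. b i < a i \<bullet> x} else {x. a i \<bullet> x < b i}))"
  have region_conn: "connected (region T)" for T
    unfolding region_def using R
    by (intro convex_connected convex_Int convex_INT)
       (auto simp: convex_halfspace_gt convex_halfspace_lt)
  have region_sub: "region T \<subseteq> R - L" for T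
  proof
    fix x assume x: "x \<in> region T"
    have "a i \<bullet> x \<noteq> b i" if "i \<in> N" for i
    proof -
      have "x \<in> (if i \<in> T then {x. b i < a i \<bullet> x} else {x. a i \<bullet> x < b i})"
        using x that unfolding region_def by blast
      then show ?thesis by (auto split: if_splits)
    qed
    then show "x \<in> R - L" using x unfolding region_def L_def by blast
  qed
  have in_own_region: "c \<in> region (side c)" if c: "c \<in> R - L" for c
    using c unfolding region_def side_def L_def by (auto simp: neq_iff)
  define rep where "rep = (\<lambda>T. connected_component_set (R - L) (SOME x. x \<in> region T))"
  have "components (R - L) \<subseteq> rep ` Pow N"
  proof
    fix C assume "C \<in> components (R - L)"
    then obtain c where c: "c \<in> R - L" "C = connected_component_set (R - L) c"
      unfolding components_iff by blast
    define x where "x = (SOME x. x \<in> region (side c))"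
    have "x \<in> region (side c)" unfolding x_def using in_own_region[OF c(1)] by (rule someI)
    then have "x \<in> C"
      using connected_component_maximal[OF in_own_region[OF c(1)] region_conn region_sub] c(2)
      by blast
    then have "C = rep (side c)"
      unfolding rep_def x_def[symmetric] using c(2) connected_component_eq by blast
    moreover have "side c \<in> Pow N" unfolding side_def by blast
    ultimately show "C \<in> rep ` Pow N" by blast
  qed
  then show ?thesis unfolding L_def using N by (meson finite_Pow_iff finite_imageI finite_subset)
qed

lemma cells_finite:
  assumes fin: "finite Pl" and pl: "\<forall>R'\<in>Pl. is_plane R'" and R: "is_plane R"
  shows "finite (cells Pl R)"
proof -
  define N where "N = {R'\<in>Pl. \<not> parallel_planes R R'}"
  have "\<forall>R'\<in>Pl. \<exists>ab. \<forall>x. x \<in> R' \<longleftrightarrow> fst ab \<bullet> x = snd ab"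
  proof
    fix R' assume "R' \<in> Pl"
    then obtain a b where "R' = {x. a \<bullet> x = b}" using pl unfolding is_plane_def by blast
    then show "\<exists>ab. \<forall>x. x \<in> R' \<longleftrightarrow> fst ab \<bullet> x = snd ab" by (intro exI[of _ "(a, b)"]) simp
  qed
  then obtain eq where eq: "\<forall>R'\<in>Pl. \<forall>x. x \<in> R' \<longleftrightarrow> fst (eq R') \<bullet> x = snd (eq R')"
    using bchoice[of Pl "\<lambda>R' ab. \<forall>x. x \<in> R' \<longleftrightarrow> fst ab \<bullet> x = snd ab"] by blast
  have "x \<in> arrangement_lines Pl R \<longleftrightarrow> (\<exists>R'\<in>N. fst (eq R') \<bullet> x = snd (eq R'))"
    if "x \<in> R" for x
    using that eq unfolding arrangement_lines_iff N_def by blast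
  then have "R - arrangement_lines Pl R = R - {x. \<exists>R'\<in>N. fst (eq R') \<bullet> x = snd (eq R')}"
    by blast
  moreover have "finite N" using fin unfolding N_def by simp
  ultimately show ?thesis
    unfolding cells_arrangement
    using finite_components_off_hyperplanes[OF is_plane_props(3)[OF R],
        of N "\<lambda>R'. fst (eq R')" "\<lambda>R'. snd (eq R')"]
    by simp
qed

lemma flat_face_point_has_disc:
  assumes P: "polyhedron P" and F: "F \<in> faces P" and y: "y \<in> F" "y \<in> flat_points P"
  shows "\<exists>\<delta>>0. ball y \<delta> \<inter> plane_of F \<subseteq> F"
proof -
  define R where "R = plane_of F"
  obtain K where K: "K \<in> components (flat_points P)" "F = closure K" "is_plane R"
     "K \<subseteq> R" "\<forall>z\<in>K. \<exists>r>0. ball z r \<inter> R \<subseteq> K"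
    using face_structure[OF P F] unfolding R_def by blast
  obtain H r where Hr: "flat_at P y H r"
    using flat_points_flat_at[OF polyhedron_regular_closed(2,3)[OF P] y(2)] by blast
  have r: "r > 0" and H: "is_plane H" using Hr unfolding flat_at_def by blast+
  have "y \<in> closure K" using K y by blast
  then obtain w where w: "w \<in> K" "dist w y < r" using r unfolding closure_approachable by blast
  obtain r' where r': "r' > 0" "ball w r' \<inter> R \<subseteq> K" using K w by blast
  define d where "d = min r' (r - dist y w)"
  have d: "d > 0" using r' w by (simp add: d_def dist_commute)
  have "ball w d \<inter> R \<subseteq> ball y r \<inter> frontier P"
  proof
    fix x assume x: "x \<in> ball w d \<inter> R"
    then have "x \<in> K" using r' by (auto simp: d_def)
    then have "x \<in> frontier P"
      using in_components_subset[OF K(1)] flat_points_subset_frontier by blast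
    moreover have "dist y x < r" using x dist_triangle[of y x w] by (simp add: d_def)
    ultimately show "x \<in> ball y r \<inter> frontier P" by simp
  qed
  then have "ball w d \<inter> R \<subseteq> H" using flat_at_frontier_in_plane[OF Hr] by blast
  then have RH: "R = H" using plane_eq_if_disc_subset[OF K(3) H _ d] w K(4) by blast
  have "connected (ball y r \<inter> R)"
    using is_plane_props(3)[OF K(3)] by (intro convex_connected convex_Int convex_ball)
  moreover have "K \<inter> (ball y r \<inter> R) \<noteq> {}" using w K(4) by (auto simp: dist_commute)
  ultimately have "ball y r \<inter> R \<subseteq> K"
    using components_maximal[OF K(1)] flat_at_imp_flat_points[OF Hr] RH by blast
  then show ?thesis using r K(2) closure_subset unfolding R_def by blast
qed

text \<open>Every point of a face off the arrangement lines of its plane has a disc of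
  the plane inside the face: at non-flat points a second face plane passes through it.\<close>
lemma face_contains_disc_off_lines:
  assumes P: "polyhedron P" and F: "F \<in> faces P" and Pl: "plane_of ` faces P \<subseteq> Pl"
    and y: "y \<in> F" "y \<notin> arrangement_lines Pl (plane_of F)"
  shows "\<exists>\<delta>>0. ball y \<delta> \<inter> plane_of F \<subseteq> F"
proof (cases "y \<in> flat_points P")
  case True
  then show ?thesis using flat_face_point_has_disc[OF P F y(1)] by blast
next
  case False
  have yf: "y \<in> frontier P" and R: "is_plane (plane_of F)"
    using face_structure[OF P F] y(1) by blast+
  with False obtain F' where F': "F' \<in> faces P" "y \<in> plane_of F'" "plane_of F' \<noteq> plane_of F"
    using nonflat_point_on_other_face_plane[OF P] by blast
  have yR: "y \<in> plane_of F" using y face_in_plane by blast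
  have "\<not> parallel_planes (plane_of F) (plane_of F')"
    using parallel_planes_meet_eq[OF R _ yR F'(2)] F'(3) by blast
  then have "y \<in> arrangement_lines Pl (plane_of F)"
    unfolding arrangement_lines_iff using F' Pl yR by blast
  then show ?thesis using y(2) by blast
qed

text \<open>Main geometric claim: a cell of a face plane meeting the face lies inside
  it.  The face is relatively clopen in the connected cell.\<close>
lemma cell_meeting_face_inside:
  assumes P: "polyhedron P" and F: "F \<in> faces P" and Pl: "plane_of ` faces P \<subseteq> Pl"
    and C: "C \<in> cells Pl (plane_of F)" and meet: "p \<in> C" "p \<in> F"
  shows "C \<subseteq> F"
proof
  fix x assume x: "x \<in> C"
  have Fcl: "closed F" using face_structure[OF P F] compact_imp_closed by blast
  have CR: "C \<subseteq> plane_of F - arrangement_lines Pl (plane_of F)" using cell_basic(2)[OF C] .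
  show "x \<in> F"
  proof (rule connected_induction_simple[OF cell_basic(1)[OF C] meet(1) x, of "\<lambda>x. x \<in> F"])
    show "p \<in> F" by (rule meet(2))
    fix a assume a: "a \<in> C"
    show "\<exists>T. openin (top_of_set C) T \<and> a \<in> T \<and> (\<forall>x\<in>T. \<forall>y\<in>T. x \<in> F \<longrightarrow> y \<in> F)"
    proof (cases "a \<in> F")
      case True
      then obtain \<delta> where "\<delta> > 0" "ball a \<delta> \<inter> plane_of F \<subseteq> F"
        using face_contains_disc_off_lines[OF P F Pl] a CR by blast
      then show ?thesis using a CR
        by (intro exI[of _ "C \<inter> ball a \<delta>"]) (auto simp: openin_open_Int)
    next
      case False
      then show ?thesis using a Fcl
        by (intro exI[of _ "C \<inter> - F"]) (auto simp: openin_open_Int open_Compl)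
    qed
  qed
qed

text \<open>Every face is covered by the closures of the cells it contains, as points
  off the arrangement lines are dense in the relatively open set K with F = closure K.\<close>
lemma face_in_closure_of_inner_cells:
  assumes fin: "finite Pl" and pl: "\<forall>R\<in>Pl. is_plane R"
    and P: "polyhedron P" and F: "F \<in> faces P" and Pl: "plane_of ` faces P \<subseteq> Pl"
  shows "F \<subseteq> \<Union>(closure ` {C \<in> cells Pl (plane_of F). C \<subseteq> F})"
proof -
  define R where "R = plane_of F"
  define CS where "CS = {C \<in> cells Pl R. C \<subseteq> F}"
  obtain K where K: "F = closure K" "is_plane R" "K \<subseteq> R" "\<forall>z\<in>K. \<exists>r>0. ball z r \<inter> R \<subseteq> K"
    using face_structure[OF P F] unfolding R_def by blast
  have "F \<subseteq> closure (\<Union>CS)"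
  proof
    fix x assume "x \<in> F"
    show "x \<in> closure (\<Union>CS)"
      unfolding closure_approachable
    proof (intro allI impI)
      fix e :: real assume e: "e > 0"
      have "x \<in> closure K" using \<open>x \<in> F\<close> K(1) by simp
      then obtain w where w: "w \<in> K" "dist w x < e / 2"
        using e half_gt_zero unfolding closure_approachable by blast
      obtain r where r: "r > 0" "ball w r \<inter> R \<subseteq> K" using K(4) w(1) by blast
      obtain y where y: "y \<in> R" "dist w y < min r (e / 2)" "y \<notin> arrangement_lines Pl R"
        using dense_off_arrangement_lines[OF fin pl K(2)] w(1) K(3) r(1) e
        by (metis half_gt_zero min_less_iff_conj subsetD)
      have "y \<in> K" using y r by auto
      then have "y \<in> F" using K(1) closure_subset by blast
      obtain C where C: "C \<in> cells Pl R" "y \<in> C" using cell_exists y(1,3) by blast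
      have "C \<subseteq> F" using cell_meeting_face_inside[OF P F Pl] C \<open>y \<in> F\<close> unfolding R_def by blast
      then have "y \<in> \<Union>CS" using C unfolding CS_def by blast
      moreover have "dist y x < e" using w y dist_triangle[of y x w] by (simp add: dist_commute)
      ultimately show "\<exists>y\<in>\<Union>CS. dist y x < e" by blast
    qed
  qed
  also have "\<dots> \<subseteq> \<Union>(closure ` CS)"
    using cells_finite[OF fin pl K(2)] unfolding CS_def
    by (intro closure_minimal) (auto intro: closure_subset[THEN subsetD])
  finally show ?thesis unfolding CS_def R_def .
qed

text \<open>There is a common radius eps such that every cell contains a disc of radius
  eps of its plane; this uses that there are only finitely many cells.\<close>
lemma uniform_cell_disc_radius:
  assumes fin: "finite Pl" and pl: "\<forall>R\<in>Pl. is_plane R"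
  shows "\<exists>\<epsilon>>0. \<forall>R\<in>Pl. \<forall>C\<in>cells Pl R. \<exists>c\<in>C. ball c \<epsilon> \<inter> R \<subseteq> C"
proof -
  define X where "X = Sigma Pl (cells Pl)"
  have "finite X" unfolding X_def using fin cells_finite[OF fin pl] pl by (intro finite_SigmaI) auto
  moreover have "\<forall>RC\<in>X. eventually (\<lambda>\<epsilon>. \<exists>c\<in>snd RC. ball c \<epsilon> \<inter> fst RC \<subseteq> snd RC) (at_right 0)"
  proof
    fix RC assume "RC \<in> X"
    then obtain R C where RC: "RC = (R, C)" "R \<in> Pl" "C \<in> cells Pl R" unfolding X_def by blast
    obtain c where c: "c \<in> C" using cell_basic(3)[OF RC(3)] by blast
    obtain \<delta> where \<delta>: "\<delta> > 0" "ball c \<delta> \<inter> R \<subseteq> C"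
      using cell_contains_disc[OF fin pl _ RC(3) c] pl RC(2) by blast
    have "\<forall>\<epsilon>>0. \<epsilon> < \<delta> \<longrightarrow> ball c \<epsilon> \<inter> R \<subseteq> C" using \<delta>(2) by auto
    then show "eventually (\<lambda>\<epsilon>. \<exists>c\<in>snd RC. ball c \<epsilon> \<inter> fst RC \<subseteq> snd RC) (at_right 0)"
      unfolding eventually_at_right_field using RC(1) c \<delta>(1) by auto
  qed
  ultimately have "eventually (\<lambda>\<epsilon>. \<forall>RC\<in>X. \<exists>c\<in>snd RC. ball c \<epsilon> \<inter> fst RC \<subseteq> snd RC) (at_right 0)"
    by (rule eventually_ball_finite)
  then obtain b :: real where "b > 0" "\<forall>\<epsilon>>0. \<epsilon> < b \<longrightarrow> (\<forall>RC\<in>X. \<exists>c\<in>snd RC. ball c \<epsilon> \<inter> fst RC \<subseteq> snd RC)"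
    unfolding eventually_at_right_field by blast
  then show ?thesis unfolding X_def by (intro exI[of _ "b / 2"]) auto
qed

definition sound_markers :: "point set set \<Rightarrow> (point \<times> point set) set \<Rightarrow> bool" where
  "sound_markers S M \<longleftrightarrow> (\<forall>(p, R)\<in>M. \<exists>P\<in>S. \<exists>F\<in>faces P. p \<in> F \<and> R = plane_of F)"

definition dense_markers :: "point set set \<Rightarrow> real \<Rightarrow> (point \<times> point set) set \<Rightarrow> bool" where
  "dense_markers S \<epsilon> M \<longleftrightarrow>
     (\<forall>P\<in>S. \<forall>F\<in>faces P. \<forall>x\<in>F. \<exists>(p, R)\<in>M. p \<in> F \<and> R = plane_of F \<and> dist x p < \<epsilon>)"

definition scene_surface :: "point set set \<Rightarrow> point set" where
  "scene_surface S = \<Union>{F | P F. P \<in> S \<and> F \<in> faces P}"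

definition reconstruction :: "point set set \<Rightarrow> (point \<times> point set) set \<Rightarrow> point set" where
  "reconstruction S M = \<Union>{closure C | R C. R \<in> scene_planes S \<and> C \<in> cells (scene_planes S) R \<and>
                                            bounded C \<and> (\<exists>p. (p, R) \<in> M \<and> p \<in> C)}"

lemma sound_markersD:
  "sound_markers S M \<Longrightarrow> (p, R) \<in> M \<Longrightarrow> \<exists>P\<in>S. \<exists>F\<in>faces P. p \<in> F \<and> R = plane_of F"
  unfolding sound_markers_def by fast

lemma dense_markersD:
  "dense_markers S \<epsilon> M \<Longrightarrow> P \<in> S \<Longrightarrow> F \<in> faces P \<Longrightarrow> x \<in> F \<Longrightarrow>
     \<exists>p. (p, plane_of F) \<in> M \<and> p \<in> F \<and> dist x p < \<epsilon>"
  unfolding dense_markers_def by fast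

lemma face_planes_in_scene: "P \<in> S \<Longrightarrow> plane_of ` faces P \<subseteq> scene_planes S"
  unfolding scene_planes_def by blast

lemma marker_planes_eq_scene_planes:
  assumes poly: "\<forall>P\<in>S. polyhedron P" and sound: "sound_markers S M"
    and dense: "dense_markers S \<epsilon> M"
  shows "snd ` M = scene_planes S"
proof
  show "snd ` M \<subseteq> scene_planes S"
    using sound_markersD[OF sound] unfolding scene_planes_def by force
  show "scene_planes S \<subseteq> snd ` M"
  proof
    fix R assume "R \<in> scene_planes S"
    then obtain P F where PF: "P \<in> S" "F \<in> faces P" "R = plane_of F"
      unfolding scene_planes_def by blast
    have "F \<noteq> {}" using face_structure[OF _ PF(2)] poly PF(1) by blast
    then obtain x where "x \<in> F" by blast
    then obtain p where "(p, plane_of F) \<in> M" using dense_markersD[OF dense PF(1,2)] by blast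
    then show "R \<in> snd ` M" using PF(3) by force
  qed
qed

text \<open>Marked cells lie in faces (soundness and the main geometric claim).\<close>
lemma reconstruction_in_surface:
  assumes poly: "\<forall>P\<in>S. polyhedron P" and sound: "sound_markers S M"
  shows "reconstruction S M \<subseteq> scene_surface S"
proof
  fix x assume "x \<in> reconstruction S M"
  then obtain R C p where C: "C \<in> cells (scene_planes S) R" and p: "(p, R) \<in> M" "p \<in> C"
    and x: "x \<in> closure C"
    unfolding reconstruction_def by blast
  obtain P F where PF: "P \<in> S" "F \<in> faces P" "p \<in> F" "R = plane_of F"
    using sound_markersD[OF sound p(1)] by blast
  have "C \<subseteq> F"
    using cell_meeting_face_inside[OF _ PF(2) face_planes_in_scene[OF PF(1)]] poly PF C p(2) by blast
  moreover have "closed F" using face_structure[OF _ PF(2)] poly PF(1) compact_imp_closed by blast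
  ultimately have "closure C \<subseteq> F" by (rule closure_minimal)
  then show "x \<in> scene_surface S" using PF x unfolding scene_surface_def by blast
qed

text \<open>Every face point is in the closure of a cell inside the face; that cell is
  bounded and, by the choice of eps, contains a marker of the face.\<close>
lemma surface_in_reconstruction:
  assumes fin: "finite (scene_planes S)" and pl: "\<forall>R\<in>scene_planes S. is_plane R"
    and poly: "\<forall>P\<in>S. polyhedron P"
    and disc: "\<forall>R\<in>scene_planes S. \<forall>C\<in>cells (scene_planes S) R. \<exists>c\<in>C. ball c \<epsilon> \<inter> R \<subseteq> C"
    and dense: "dense_markers S \<epsilon> M"
  shows "scene_surface S \<subseteq> reconstruction S M"
proof
  fix x assume "x \<in> scene_surface S"
  then obtain P F where PF: "P \<in> S" "F \<in> faces P" and x: "x \<in> F"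
    unfolding scene_surface_def by blast
  define R where "R = plane_of F"
  have P: "polyhedron P" using poly PF by blast
  have R: "R \<in> scene_planes S" using face_planes_in_scene[OF PF(1)] PF(2) unfolding R_def by blast
  obtain C where C: "C \<in> cells (scene_planes S) R" "C \<subseteq> F" "x \<in> closure C"
    using face_in_closure_of_inner_cells[OF fin pl P PF(2) face_planes_in_scene[OF PF(1)]] x
    unfolding R_def by blast
  have "bounded C" using C(2) face_structure[OF P PF(2)] by (meson bounded_subset compact_imp_bounded)
  obtain c where c: "c \<in> C" "ball c \<epsilon> \<inter> R \<subseteq> C" using disc R C(1) by blast
  obtain p where p: "(p, R) \<in> M" "p \<in> F" "dist c p < \<epsilon>"
    using dense_markersD[OF dense PF] c(1) C(2) unfolding R_def by blast
  have "p \<in> C" using c p face_in_plane[of F] unfolding R_def by auto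
  then show "x \<in> reconstruction S M"
    using R C \<open>bounded C\<close> p(1) unfolding reconstruction_def by blast
qed

text \<open>Main theorem: with eps a common cell radius, any sound and eps-dense marker set
  recovers the scene planes and the scene surface.\<close>
theorem mainTheorem2:
  fixes S :: "point set set"
  assumes "finite S" and "\<forall>P\<in>S. polyhedron P"
  shows "\<exists>\<epsilon>>0. \<forall>M :: (point \<times> point set) set.
           finite M \<and>
           (\<forall>(p, R)\<in>M. \<exists>P\<in>S. \<exists>F\<in>faces P. p \<in> F \<and> R = plane_of F) \<and>
           (\<forall>P\<in>S. \<forall>F\<in>faces P. \<forall>x\<in>F. \<exists>(p, R)\<in>M. p \<in> F \<and> R = plane_of F \<and> dist x p < \<epsilon>)
           \<longrightarrow>
           snd ` M = scene_planes S \<and>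
           \<Union>{F | P F. P \<in> S \<and> F \<in> faces P} =
           \<Union>{closure C | R C. R \<in> scene_planes S \<and> C \<in> cells (scene_planes S) R \<and> bounded C \<and>
                              (\<exists>p. (p, R) \<in> M \<and> p \<in> C)}"
proof -
  note fin_pl = scene_planes_finite_planes[OF assms]
  obtain \<epsilon> where \<epsilon>: "\<epsilon> > 0"
    and disc: "\<forall>R\<in>scene_planes S. \<forall>C\<in>cells (scene_planes S) R. \<exists>c\<in>C. ball c \<epsilon> \<inter> R \<subseteq> C"
    using uniform_cell_disc_radius[OF fin_pl] by blast
  have "snd ` M = scene_planes S \<and> scene_surface S = reconstruction S M"
    if sound: "sound_markers S M" and dense: "dense_markers S \<epsilon> M" for M
    using marker_planes_eq_scene_planes[OF assms(2) sound dense]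
      surface_in_reconstruction[OF fin_pl assms(2) disc dense]
      reconstruction_in_surface[OF assms(2) sound] by blast
  then show ?thesis
    unfolding sound_markers_def[symmetric] dense_markers_def[symmetric]
      scene_surface_def[symmetric] reconstruction_def[symmetric]
    using \<epsilon> by blast
qed

end
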